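(* Fix positive integers $m,D,L$ and $M>0$. Let $\mathcal G_M$ be the class of functions $(s,a,s')\mapsto f(s,\theta(a))-\gamma\max_{a'\in A}f(s',\theta(a'))$ on $S\times A\times S$, over all families $\Theta=\{\theta(a)\}_{a\in A}$ in which each $f(\cdot,\theta(a))$ is a residual network of size $(d,m,D,L)$ and $\|\Theta\|_{\mathcal P}\le M$. Then for samples $\mathcal S$ of size $n$ as in the context, $$\mathrm{Rad}(\mathcal G_M)\le 6|A|^3M\sqrt{\frac{2\ln(2d)}{n}}.$$
   Context: Residual networks: for positive integers $d,m,D,L$, a residual network of size $(d,m,D,L)$ is a function $f(\cdot,\theta):\mathbb R^d\to\mathbb R$, $f(x,\theta)=u^{\top}h^{[L]}$, where $h^{[0]}=Vx$ and $h^{[l]}=h^{[l-1]}+U^{[l]}\sigma(W^{[l]}h^{[l-1]})$ for $l=1,\dots,L$, with $V\in\mathbb R^{D\times d}$, $W^{[l]}\in\mathbb R^{m\times D}$, $U^{[l]}\in\mathbb R^{D\times m}$, $u\in\mathbb R^D$, $\sigma(z)=\max(z,0)$ applied entrywise, and $\theta=(u,V,\{W^{[l]}\}_{l=1}^L,\{U^{[l]}\}_{l=1}^L)$. Its weighted path norm is $\|\theta\|_{\mathcal P}=\big\||u|^{\top}(I+3|U^{[L]}||W^{[L]}|)\cdots(I+3|U^{[1]}||W^{[1]}|)|V|\big\|_1$, where $|\cdot|$ of a matrix/vector is entrywise absolute value and $I$ is the $D\times D$ identity. For a family $\Theta=\{\theta(a)\}_{a\in A}$ of parameters (one network per action, all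 of the same size), $f(s,\theta(a))$ denotes the $a$-th network and $\|\Theta\|_{\mathcal P}=\sum_{a\in A}\|\theta(a)\|_{\mathcal P}$. Setting: $S\subseteq[0,1]^d$ is compact with positive Lebesgue measure; $A$ is a finite action set with $|A|=2^{\alpha}$, $\alpha\ge0$ an integer; $\gamma\in(0,1)$; $\tilde g:S\times A\times[0,\infty)\to S$ is a transition map and $\Delta t\in(0,1)$ is fixed; $\mathcal D$ is the uniform distribution on $S$ and $\mathcal U$ the uniform distribution on $A$. A sample $\mathcal S=\{z_i=(s_i,a_i,s_i')\}_{i=1}^n$ consists of i.i.d. pairs $s_i\sim\mathcal D$, $a_i\sim\mathcal U$ (independent) with $s_i'=\tilde g(s_i,a_i,\Delta t)$. Rademacher complexity: for a class $\mathcal G$ of real functions, $\mathrm{Rad}_{\mathcal S}(\mathcal G)=\frac1n\mathbb E_\tau\big[\sup_{g\in\mathcal G}\sum_{i=1}^n\tau_ig(z_i)\big]$ with $\tau_1,\dots,\tau_n$ i.i.d. uniform on $\{-1,+1\}$, and $\mathrm{Rad}(\mathcal G)=\mathbb E_{\mathcal S}[\mathrm{Rad}_{\mathcal S}(\mathcal G)]$. *)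

theory Defs
  imports "HOL-Probability.Probability"
begin

text \<open>Index conventions (entries outside the ranges below are never used):
  out_w i (i < D) is u; in_w i j (i < D) is V; W_w l k j (1 \<le> l \<le> L, k < m, j < D) is W^[l];
  U_w l i k (1 \<le> l \<le> L, i < D, k < m) is U^[l].\<close>
record 'd resnet_param =
  out_w :: "nat \<Rightarrow> real"
  in_w  :: "nat \<Rightarrow> 'd \<Rightarrow> real"
  W_w   :: "nat \<Rightarrow> nat \<Rightarrow> nat \<Rightarrow> real"
  U_w   :: "nat \<Rightarrow> nat \<Rightarrow> nat \<Rightarrow> real"

definition relu :: "real \<Rightarrow> real" where
  "relu z = max z 0"

fun hid :: "nat \<Rightarrow> nat \<Rightarrow> ('d::finite) resnet_param \<Rightarrow> real^'d \<Rightarrow> nat \<Rightarrow> nat \<Rightarrow> real" where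
  "hid m D th x 0 = (\<lambda>i. \<Sum>j\<in>UNIV. in_w th i j * x $ j)"
| "hid m D th x (Suc l) = (\<lambda>i. hid m D th x l i +
      (\<Sum>k<m. U_w th (Suc l) i k * relu (\<Sum>j<D. W_w th (Suc l) k j * hid m D th x l j)))"

definition resnet :: "nat \<Rightarrow> nat \<Rightarrow> nat \<Rightarrow> real^'d \<Rightarrow> ('d::finite) resnet_param \<Rightarrow> real" where
  "resnet m D L x th = (\<Sum>i<D. out_w th i * hid m D th x L i)"

text \<open>pmat l = (I+3|U^[l]||W^[l]|)...(I+3|U^[1]||W^[1]|)|V|, a D x d matrix.\<close>
fun pmat :: "nat \<Rightarrow> nat \<Rightarrow> ('d::finite) resnet_param \<Rightarrow> nat \<Rightarrow> nat \<Rightarrow> 'd \<Rightarrow> real" where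
  "pmat m D th 0 = (\<lambda>i j. \<bar>in_w th i j\<bar>)"
| "pmat m D th (Suc l) = (\<lambda>i j. pmat m D th l i j +
      3 * (\<Sum>k<m. \<Sum>i'<D. \<bar>U_w th (Suc l) i k\<bar> * \<bar>W_w th (Suc l) k i'\<bar> * pmat m D th l i' j))"

definition path_norm :: "nat \<Rightarrow> nat \<Rightarrow> nat \<Rightarrow> ('d::finite) resnet_param \<Rightarrow> real" where
  "path_norm m D L th = (\<Sum>j\<in>UNIV. \<bar>\<Sum>i<D. \<bar>out_w th i\<bar> * pmat m D th L i j\<bar>)"

definition G_class :: "nat \<Rightarrow> nat \<Rightarrow> nat \<Rightarrow> 'a set \<Rightarrow> real \<Rightarrow> real \<Rightarrow>
    ((real^'d) \<times> 'a \<times> (real^'d) \<Rightarrow> real) set" where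
  "G_class m D L A \<gamma> M =
     {(\<lambda>(s, a, s'). resnet m D L s (\<Theta> a) - \<gamma> * Max ((\<lambda>a'. resnet m D L s' (\<Theta> a')) ` A)) | \<Theta>.
        (\<Sum>a\<in>A. path_norm m D L (\<Theta> a)) \<le> M}"

text \<open>Empirical Rademacher complexity on the sample z 0, ..., z (n-1); the expectation
  over tau uniform on {-1,1}^n is written as an average.\<close>
definition emp_rad :: "('z \<Rightarrow> real) set \<Rightarrow> nat \<Rightarrow> (nat \<Rightarrow> 'z) \<Rightarrow> real" where
  "emp_rad G n z = (1 / real n) *
     ((\<Sum>\<tau>\<in>({..<n} \<rightarrow>\<^sub>E {-1, 1::real}). (SUP g\<in>G. \<Sum>i<n. \<tau> i * g (z i))) / 2 ^ n)"

definition pair_dist :: "(real^'d::finite) set \<Rightarrow> 'a set \<Rightarrow> ((real^'d) \<times> 'a) measure" where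
  "pair_dist S A = uniform_measure lborel S \<Otimes>\<^sub>M uniform_count_measure A"

text \<open>Rad(G) = E_sample [emp_rad], with s_i' = gt s_i a_i dt; the expectation of the
  nonnegative empirical complexity is taken as a nonnegative (ennreal) integral.\<close>
definition rad :: "(((real^'d::finite) \<times> 'a \<times> (real^'d)) \<Rightarrow> real) set \<Rightarrow> nat \<Rightarrow>
    (real^'d) set \<Rightarrow> 'a set \<Rightarrow> ((real^'d) \<Rightarrow> 'a \<Rightarrow> real \<Rightarrow> real^'d) \<Rightarrow> real \<Rightarrow> ennreal" where
  "rad G n S A gt dt =
     (\<integral>\<^sup>+ \<omega>. ennreal (emp_rad G n (\<lambda>i. (fst (\<omega> i), snd (\<omega> i), gt (fst (\<omega> i)) (snd (\<omega> i)) dt)))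
        \<partial>(\<Pi>\<^sub>M i\<in>{..<n}. pair_dist S A))"

end

theory Submission
  imports Defs
begin

(* A residual network of path norm p is a combination of coordinate functions and ReLU units in
   which passing through a ReLU costs a factor 3; the maximum of 2^alpha such functions, built
   from max f g = g + relu (f - g), costs a factor 7^alpha <= |A|^3.  So it suffices to bound the
   Rademacher sum of the unit ball of such combinations.  Splitting an element of the ball by its
   outermost operations, the sum is at most the linear part, bounded by Massart's lemma applied to
   the 2d functions +-x_j, plus a third of the sums for relu o f and -relu o f; by the contraction
   lemma the latter are bounded by the sum for the ball itself.  Hence the ball's sum is at most
   three times Massart's bound.  The class G_M is reduced to |A| + 7^alpha scaled copies of the
   ball by splitting the sample according to the action. *)

section \<open>Functions of bounded path norm\<close>

lemma relu_abs_le: "\<bar>relu z\<bar> \<le> \<bar>z\<bar>"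
  by (simp add: relu_def)

lemma relu_lipschitz: "\<bar>relu a - relu b\<bar> \<le> \<bar>a - b\<bar>"
  by (simp add: relu_def)

lemma relu_mult_nonneg: "c \<ge> 0 \<Longrightarrow> relu (c * z) = c * relu z"
  by (simp add: relu_def max_def mult_le_0_iff zero_le_mult_iff)

(* path_class f q: f is a finite combination of coordinates and ReLU units whose weighted
   path norm is at most q; as in the path norm, passing through a ReLU costs a factor 3. *)
inductive path_class :: "((real^'d::finite) \<Rightarrow> real) \<Rightarrow> real \<Rightarrow> bool" where
  coord: "path_class (\<lambda>x. c * x $ j) \<bar>c\<bar>"
| relu_unit: "path_class \<phi> q \<Longrightarrow> path_class (\<lambda>x. c * relu (\<phi> x)) (3 * \<bar>c\<bar> * q)"
| add: "path_class f p \<Longrightarrow> path_class g q \<Longrightarrow> path_class (\<lambda>x. f x + g x) (p + q)"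
| mono: "path_class f p \<Longrightarrow> p \<le> q \<Longrightarrow> path_class f q"

lemma path_class_nonneg: "path_class f q \<Longrightarrow> q \<ge> 0"
  by (induction rule: path_class.induct) auto

lemma path_class_cong: "path_class f p \<Longrightarrow> (\<And>x. f x = g x) \<Longrightarrow> p = q \<Longrightarrow> path_class g q"
  by (metis ext)

lemma path_class_zero: "path_class (\<lambda>x. 0) 0"
  using path_class.coord[of 0] by simp

lemma path_class_scale: "path_class f q \<Longrightarrow> path_class (\<lambda>x. c * f x) (\<bar>c\<bar> * q)"
proof (induction rule: path_class.induct)
  case (coord c' j)
  show ?case by (rule path_class_cong[OF path_class.coord[of "c * c'" j]]) (auto simp: abs_mult)
next
  case (relu_unit \<phi> q c')
  show ?case
    by (rule path_class_cong[OF path_class.relu_unit[OF relu_unit.hyps, of "c * c'"]])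
       (auto simp: abs_mult)
next
  case (add f p g q)
  show ?case by (rule path_class_cong[OF path_class.add[OF add.IH]]) (auto simp: algebra_simps)
next
  case (mono f p q)
  show ?case by (rule path_class.mono[OF mono.IH]) (simp add: mono.hyps mult_left_mono)
qed

lemma path_class_sum:
  "finite I \<Longrightarrow> (\<And>i. i \<in> I \<Longrightarrow> path_class (F i) (p i)) \<Longrightarrow>
    path_class (\<lambda>x. \<Sum>i\<in>I. F i x) (\<Sum>i\<in>I. p i)"
proof (induction I rule: finite_induct)
  case empty
  then show ?case by (simp add: path_class_zero)
next
  case (insert a I)
  show ?case
    by (rule path_class_cong[OF path_class.add[OF insert.prems[of a] insert.IH]]) (use insert in auto)
qed

lemma path_class_abs_le:
  assumes "path_class f q" and "\<forall>j. \<bar>x $ j\<bar> \<le> 1"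
  shows "\<bar>f x\<bar> \<le> q"
  using assms(1)
proof (induction rule: path_class.induct)
  case (coord c j)
  then show ?case using assms(2) by (simp add: abs_mult mult_left_le)
next
  case (relu_unit \<phi> q c)
  have "\<bar>c * relu (\<phi> x)\<bar> \<le> \<bar>c\<bar> * q"
    using relu_abs_le[of "\<phi> x"] relu_unit.IH by (simp add: abs_mult mult_left_mono)
  also have "\<dots> \<le> 3 * \<bar>c\<bar> * q"
    using path_class_nonneg[OF relu_unit.hyps] by simp
  finally show ?case .
next
  case (add f p g q)
  then show ?case by (smt (verit))
qed auto

lemma path_class_at_zero: "path_class f q \<Longrightarrow> f 0 = 0"
  by (induction rule: path_class.induct) (auto simp: relu_def)

(* max f g = g + relu (f - g) *)
lemma path_class_max:
  assumes f: "path_class f p" and g: "path_class g q"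
  shows "path_class (\<lambda>x. max (f x) (g x)) (3 * p + 4 * q)"
proof -
  have "path_class (\<lambda>x. f x + (-1) * g x) (p + q)"
    using path_class.add[OF f path_class_scale[OF g, of "-1"]] by simp
  from path_class.relu_unit[OF this, of 1]
  have "path_class (\<lambda>x. 1 * relu (f x + (-1) * g x)) (3 * 1 * (p + q))" by simp
  from path_class.add[OF g this] show ?thesis
    by (rule path_class_cong) (auto simp: relu_def max_def)
qed

lemma path_class_Max:
  assumes "finite A" and "card A = 2 ^ \<alpha>" and "\<And>a. a \<in> A \<Longrightarrow> path_class (F a) (p a)"
  shows "path_class (\<lambda>x. Max ((\<lambda>a. F a x) ` A)) (7 ^ \<alpha> * (\<Sum>a\<in>A. p a))"
  using assms
proof (induction \<alpha> arbitrary: A)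
  case 0
  then obtain a where "A = {a}" by (auto simp: card_1_singleton_iff)
  then show ?case using "0.prems"(3)[of a] by simp
next
  case (Suc \<alpha>)
  obtain A1 where A1: "A1 \<subseteq> A" "card A1 = 2 ^ \<alpha>"
    using obtain_subset_with_card_n[of "2 ^ \<alpha>" A] Suc.prems(2) by auto
  define A2 where "A2 = A - A1"
  have fin: "finite A1" "finite A2" using A1 Suc.prems(1) finite_subset by (auto simp: A2_def)
  have A2: "card A2 = 2 ^ \<alpha>" using A1 Suc.prems(1,2) fin by (simp add: A2_def card_Diff_subset)
  have ne: "A1 \<noteq> {}" "A2 \<noteq> {}" using A1 A2 by auto
  have split: "A = A1 \<union> A2" "A1 \<inter> A2 = {}" using A1 by (auto simp: A2_def)
  have nonneg: "(\<Sum>a\<in>B. p a) \<ge> 0" if "B \<subseteq> A" for B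
    using Suc.prems(3) that path_class_nonneg by (auto intro!: sum_nonneg)
  have "path_class (\<lambda>x. max (Max ((\<lambda>a. F a x) ` A1)) (Max ((\<lambda>a. F a x) ` A2)))
          (3 * (7 ^ \<alpha> * (\<Sum>a\<in>A1. p a)) + 4 * (7 ^ \<alpha> * (\<Sum>a\<in>A2. p a)))"
    using Suc.IH[OF fin(1) A1(2)] Suc.IH[OF fin(2) A2] Suc.prems(3) A1(1)
    by (intro path_class_max) (auto simp: A2_def)
  then have "path_class (\<lambda>x. Max ((\<lambda>a. F a x) ` A))
          (3 * (7 ^ \<alpha> * (\<Sum>a\<in>A1. p a)) + 4 * (7 ^ \<alpha> * (\<Sum>a\<in>A2. p a)))"
    by (rule path_class_cong) (auto simp: split image_Un Max_Un fin ne)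
  moreover have "(\<Sum>a\<in>A. p a) = (\<Sum>a\<in>A1. p a) + (\<Sum>a\<in>A2. p a)"
    unfolding split(1) by (rule sum.union_disjoint[OF fin split(2)])
  ultimately show ?case
    using nonneg[of A1] nonneg[of A2] A1(1) by (auto simp: A2_def algebra_simps intro: path_class.mono)
qed

section \<open>Residual networks\<close>

lemma pmat_nonneg: "pmat m D th l i j \<ge> 0"
  by (induction l arbitrary: i j) (auto intro!: add_nonneg_nonneg sum_nonneg mult_nonneg_nonneg)

lemma sum_weighted_pmat_Suc:
  "(\<Sum>j\<in>UNIV. \<Sum>i<D. \<bar>w i\<bar> * pmat m D th (Suc l) i j)
   = (\<Sum>j\<in>UNIV. \<Sum>i<D. \<bar>w i\<bar> * pmat m D th l i j)
     + 3 * (\<Sum>k<m. (\<Sum>i<D. \<bar>w i\<bar> * \<bar>U_w th (Suc l) i k\<bar>)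
                  * (\<Sum>j\<in>UNIV. \<Sum>i'<D. \<bar>W_w th (Suc l) k i'\<bar> * pmat m D th l i' j))"
proof -
  define G where "G k j i' i = \<bar>w i\<bar> * (\<bar>U_w th (Suc l) i k\<bar> * (\<bar>W_w th (Suc l) k i'\<bar> * pmat m D th l i' j))"
    for k j i' i
  have "(\<Sum>k<m. (\<Sum>i<D. \<bar>w i\<bar> * \<bar>U_w th (Suc l) i k\<bar>)
                  * (\<Sum>j\<in>UNIV. \<Sum>i'<D. \<bar>W_w th (Suc l) k i'\<bar> * pmat m D th l i' j))
      = (\<Sum>k<m. \<Sum>j\<in>UNIV. \<Sum>i'<D. \<Sum>i<D. G k j i' i)"
    by (simp add: G_def sum_distrib_left sum_distrib_right mult.assoc)
  also have "\<dots> = (\<Sum>j\<in>UNIV. \<Sum>k<m. \<Sum>i<D. \<Sum>i'<D. G k j i' i)"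
    by (subst sum.swap) (rule sum.cong[OF refl], rule sum.cong[OF refl], rule sum.swap)
  also have "\<dots> = (\<Sum>j\<in>UNIV. \<Sum>i<D. \<Sum>k<m. \<Sum>i'<D. G k j i' i)"
    by (rule sum.cong[OF refl], rule sum.swap)
  finally have "(\<Sum>k<m. (\<Sum>i<D. \<bar>w i\<bar> * \<bar>U_w th (Suc l) i k\<bar>)
                  * (\<Sum>j\<in>UNIV. \<Sum>i'<D. \<bar>W_w th (Suc l) k i'\<bar> * pmat m D th l i' j))
      = (\<Sum>j\<in>UNIV. \<Sum>i<D. \<Sum>k<m. \<Sum>i'<D. G k j i' i)" .
  moreover have "(\<Sum>j\<in>UNIV. \<Sum>i<D. \<bar>w i\<bar> * pmat m D th (Suc l) i j)
      = (\<Sum>j\<in>UNIV. \<Sum>i<D. \<bar>w i\<bar> * pmat m D th l i j)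
        + 3 * (\<Sum>j\<in>UNIV. \<Sum>i<D. \<Sum>k<m. \<Sum>i'<D. G k j i' i)"
    by (simp add: G_def sum.distrib sum_distrib_left distrib_left mult.assoc mult.left_commute[of 3])
  ultimately show ?thesis
    by simp
qed

lemma path_class_hid:
  "path_class (\<lambda>x. \<Sum>i<D. w i * hid m D th x l i) (\<Sum>j\<in>UNIV. \<Sum>i<D. \<bar>w i\<bar> * pmat m D th l i j)"
proof (induction l arbitrary: w)
  case 0
  have "path_class (\<lambda>x. \<Sum>j\<in>UNIV. (\<Sum>i<D. w i * in_w th i j) * x $ j)
          (\<Sum>j\<in>UNIV. \<bar>\<Sum>i<D. w i * in_w th i j\<bar>)"
    by (rule path_class_sum) (auto intro: path_class.coord)
  then have "path_class (\<lambda>x. \<Sum>i<D. w i * hid m D th x 0 i) (\<Sum>j\<in>UNIV. \<bar>\<Sum>i<D. w i * in_w th i j\<bar>)"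
    by (rule path_class_cong)
       (auto simp: sum_distrib_left sum_distrib_right mult.assoc intro: sum.swap)
  then show ?case
    by (rule path_class.mono)
       (auto simp: abs_mult intro!: sum_mono intro: order_trans[OF sum_abs])
next
  case (Suc l)
  define c where "c k = (\<Sum>i<D. w i * U_w th (Suc l) i k)" for k
  define a where "a k = (\<Sum>i<D. \<bar>w i\<bar> * \<bar>U_w th (Suc l) i k\<bar>)" for k
  define N where "N k = (\<Sum>j\<in>UNIV. \<Sum>i'<D. \<bar>W_w th (Suc l) k i'\<bar> * pmat m D th l i' j)" for k
  have "path_class (\<lambda>x. \<Sum>k<m. c k * relu (\<Sum>j<D. W_w th (Suc l) k j * hid m D th x l j))
          (\<Sum>k<m. 3 * \<bar>c k\<bar> * N k)"
    by (rule path_class_sum) (auto intro!: path_class.relu_unit Suc.IH simp: N_def)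
  from path_class.add[OF Suc.IH[of w] this]
  have "path_class (\<lambda>x. \<Sum>i<D. w i * hid m D th x (Suc l) i)
          ((\<Sum>j\<in>UNIV. \<Sum>i<D. \<bar>w i\<bar> * pmat m D th l i j) + (\<Sum>k<m. 3 * \<bar>c k\<bar> * N k))"
    by (rule path_class_cong)
       (auto simp: c_def sum.distrib sum_distrib_left sum_distrib_right algebra_simps intro: sum.swap)
  moreover have "(\<Sum>k<m. 3 * \<bar>c k\<bar> * N k) \<le> 3 * (\<Sum>k<m. a k * N k)"
  proof -
    have "\<bar>c k\<bar> \<le> a k" for k
      unfolding c_def a_def by (auto simp: abs_mult intro: order_trans[OF sum_abs])
    moreover have "N k \<ge> 0" for k
      unfolding N_def by (auto intro!: sum_nonneg mult_nonneg_nonneg pmat_nonneg)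
    ultimately show ?thesis
      unfolding sum_distrib_left by (auto intro!: sum_mono mult_right_mono)
  qed
  ultimately show ?case
    unfolding sum_weighted_pmat_Suc a_def N_def by (meson add_left_mono path_class.mono)
qed

lemma resnet_path_class: "path_class (\<lambda>x. resnet m D L x th) (path_norm m D L th)"
proof -
  have "path_norm m D L th = (\<Sum>j\<in>UNIV. \<Sum>i<D. \<bar>out_w th i\<bar> * pmat m D th L i j)"
    unfolding path_norm_def
    by (intro sum.cong refl abs_of_nonneg sum_nonneg mult_nonneg_nonneg) (auto simp: pmat_nonneg)
  then show ?thesis
    using path_class_hid[of "out_w th" m D th L] by (simp add: resnet_def)
qed

lemma path_norm_nonneg: "path_norm m D L th \<ge> 0"
  using path_class_nonneg[OF resnet_path_class] .

lemma resnet_at_zero: "resnet m D L 0 th = 0"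
  using path_class_at_zero[OF resnet_path_class] .

section \<open>Sums over sign vectors\<close>

abbreviation signs :: "nat \<Rightarrow> (nat \<Rightarrow> real) set" where
  "signs n \<equiv> {..<n} \<rightarrow>\<^sub>E {-1, 1}"

lemma sum_signs_Suc:
  "(\<Sum>\<tau>\<in>signs (Suc n). F \<tau>) = (\<Sum>\<tau>\<in>signs n. F (\<tau>(n := 1)) + F (\<tau>(n := -1)))"
proof -
  have "(\<Sum>\<tau>\<in>signs (Suc n). F \<tau>) = (\<Sum>z\<in>{-1, 1::real} \<times> signs n. F ((\<lambda>(y, g). g(n := y)) z))"
    unfolding lessThan_Suc PiE_insert_eq by (subst sum.reindex) (auto intro!: inj_combinator)
  also have "\<dots> = (\<Sum>\<tau>\<in>signs n. F (\<tau>(n := 1)) + F (\<tau>(n := -1)))"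
    by (simp add: sum.cartesian_product' sum.distrib add.commute)
  finally show ?thesis .
qed

lemma signs_abs: "\<tau> \<in> signs n \<Longrightarrow> i < n \<Longrightarrow> \<bar>\<tau> i\<bar> = 1"
  by (auto simp: PiE_def Pi_def)

lemma abs_sum_signs_le:
  assumes "\<tau> \<in> signs n" and "\<And>i. i < n \<Longrightarrow> \<bar>u i\<bar> \<le> K"
  shows "\<bar>\<Sum>i<n. \<tau> i * u i\<bar> \<le> real n * K"
proof -
  have "\<bar>\<Sum>i<n. \<tau> i * u i\<bar> \<le> (\<Sum>i<n. \<bar>\<tau> i * u i\<bar>)" by (rule sum_abs)
  also have "\<dots> \<le> (\<Sum>i<n. K)"
    using assms signs_abs by (intro sum_mono) (auto simp: abs_mult)
  finally show ?thesis by simp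
qed

lemma bdd_above_image_abs_le: "(\<And>i. i \<in> I \<Longrightarrow> \<bar>f i :: real\<bar> \<le> K) \<Longrightarrow> bdd_above (f ` I)"
  by (rule bdd_aboveI2[where M = K]) (meson abs_le_D1)

lemma SUP_plus_SUP_minus_contraction:
  fixes c w :: "'i \<Rightarrow> real"
  assumes I: "I \<noteq> {}" and c: "\<And>\<iota>. \<iota> \<in> I \<Longrightarrow> \<bar>c \<iota>\<bar> \<le> K1"
    and w: "\<And>\<iota>. \<iota> \<in> I \<Longrightarrow> \<bar>w \<iota>\<bar> \<le> K2"
    and \<psi>: "\<And>a b. \<bar>\<psi> a - \<psi> b\<bar> \<le> \<bar>a - b\<bar>"
  shows "(SUP \<iota>\<in>I. c \<iota> + \<psi> (w \<iota>)) + (SUP \<iota>\<in>I. c \<iota> - \<psi> (w \<iota>))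
           \<le> (SUP \<iota>\<in>I. c \<iota> + w \<iota>) + (SUP \<iota>\<in>I. c \<iota> - w \<iota>)"
proof -
  define R where "R = (SUP \<iota>\<in>I. c \<iota> + w \<iota>) + (SUP \<iota>\<in>I. c \<iota> - w \<iota>)"
  have "bdd_above ((\<lambda>\<iota>. c \<iota> + w \<iota>) ` I)" "bdd_above ((\<lambda>\<iota>. c \<iota> - w \<iota>) ` I)"
    by (rule bdd_above_image_abs_le[where K = "K1 + K2"], use c w in \<open>smt (verit)\<close>)+
  note upper = this[THEN cSUP_upper[rotated]]
  have pair: "c \<iota> + \<psi> (w \<iota>) + (c \<iota>' - \<psi> (w \<iota>')) \<le> R" if "\<iota> \<in> I" "\<iota>' \<in> I" for \<iota> \<iota>'
    \<comment> \<open>pair the larger of \<open>w \<iota>\<close>, \<open>w \<iota>'\<close> with the plus sign\<close>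
    using \<psi>[of "w \<iota>" "w \<iota>'"] upper[OF that(1)] upper[OF that(2)] unfolding R_def
    by (cases "w \<iota> \<ge> w \<iota>'") auto
  have "c \<iota>' - \<psi> (w \<iota>') \<le> R - (SUP \<iota>\<in>I. c \<iota> + \<psi> (w \<iota>))" if "\<iota>' \<in> I" for \<iota>'
    using cSUP_least[OF I, of "\<lambda>\<iota>. c \<iota> + \<psi> (w \<iota>)" "R - (c \<iota>' - \<psi> (w \<iota>'))"] pair that
    by force
  then have "(SUP \<iota>\<in>I. c \<iota> - \<psi> (w \<iota>)) \<le> R - (SUP \<iota>\<in>I. c \<iota> + \<psi> (w \<iota>))"
    by (intro cSUP_least[OF I]) auto
  then show ?thesis unfolding R_def by linarith
qed

(* Contraction lemma; the offset b is what lets the induction over coordinates go through. *)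
lemma sum_signs_SUP_contraction:
  fixes v :: "'i \<Rightarrow> nat \<Rightarrow> real" and b :: "'i \<Rightarrow> real"
  assumes I: "I \<noteq> {}" and v: "\<And>\<iota> i. \<iota> \<in> I \<Longrightarrow> \<bar>v \<iota> i\<bar> \<le> K"
    and b: "\<And>\<iota>. \<iota> \<in> I \<Longrightarrow> \<bar>b \<iota>\<bar> \<le> Kb"
    and \<psi>: "\<And>a c. \<bar>\<psi> a - \<psi> c\<bar> \<le> \<bar>a - c\<bar>"
  shows "(\<Sum>\<tau>\<in>signs n. SUP \<iota>\<in>I. b \<iota> + (\<Sum>i<n. \<tau> i * \<psi> (v \<iota> i)))
       \<le> (\<Sum>\<tau>\<in>signs n. SUP \<iota>\<in>I. b \<iota> + (\<Sum>i<n. \<tau> i * v \<iota> i))"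
  using b
proof (induction n arbitrary: b Kb)
  case 0
  show ?case by simp
next
  case (Suc n)
  define c where "c \<tau> \<iota> = b \<iota> + (\<Sum>i<n. \<tau> i * v \<iota> i)" for \<tau> \<iota>
  have IH: "(\<Sum>\<tau>\<in>signs n. SUP \<iota>\<in>I. (b \<iota> + s * \<psi> (v \<iota> n)) + (\<Sum>i<n. \<tau> i * \<psi> (v \<iota> i)))
       \<le> (\<Sum>\<tau>\<in>signs n. SUP \<iota>\<in>I. (b \<iota> + s * \<psi> (v \<iota> n)) + (\<Sum>i<n. \<tau> i * v \<iota> i))"
    if "s \<in> {-1, 1}" for s
  proof (rule Suc.IH)
    fix \<iota> assume "\<iota> \<in> I"
    then show "\<bar>b \<iota> + s * \<psi> (v \<iota> n)\<bar> \<le> Kb + (\<bar>\<psi> 0\<bar> + K)"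
      using Suc.prems[of \<iota>] \<psi>[of "v \<iota> n" 0] v[of \<iota> n] that by auto
  qed
  have "(\<Sum>\<tau>\<in>signs (Suc n). SUP \<iota>\<in>I. b \<iota> + (\<Sum>i<Suc n. \<tau> i * \<psi> (v \<iota> i)))
      = (\<Sum>\<tau>\<in>signs n. SUP \<iota>\<in>I. (b \<iota> + 1 * \<psi> (v \<iota> n)) + (\<Sum>i<n. \<tau> i * \<psi> (v \<iota> i)))
        + (\<Sum>\<tau>\<in>signs n. SUP \<iota>\<in>I. (b \<iota> + -1 * \<psi> (v \<iota> n)) + (\<Sum>i<n. \<tau> i * \<psi> (v \<iota> i)))"
    by (simp add: sum_signs_Suc sum.distrib algebra_simps)
  also have "\<dots> \<le> (\<Sum>\<tau>\<in>signs n. (SUP \<iota>\<in>I. c \<tau> \<iota> + \<psi> (v \<iota> n)) + (SUP \<iota>\<in>I. c \<tau> \<iota> - \<psi> (v \<iota> n)))"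
    using IH[of 1] IH[of "-1"] by (simp add: c_def sum.distrib algebra_simps)
  also have "\<dots> \<le> (\<Sum>\<tau>\<in>signs n. (SUP \<iota>\<in>I. c \<tau> \<iota> + v \<iota> n) + (SUP \<iota>\<in>I. c \<tau> \<iota> - v \<iota> n))"
  proof (rule sum_mono)
    fix \<tau> assume \<tau>: "\<tau> \<in> signs n"
    have "\<bar>c \<tau> \<iota>\<bar> \<le> Kb + real n * K" if "\<iota> \<in> I" for \<iota>
      using Suc.prems[OF that] abs_sum_signs_le[OF \<tau>, of "v \<iota>" K] v[OF that]
      unfolding c_def by fastforce
    then show "(SUP \<iota>\<in>I. c \<tau> \<iota> + \<psi> (v \<iota> n)) + (SUP \<iota>\<in>I. c \<tau> \<iota> - \<psi> (v \<iota> n))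
        \<le> (SUP \<iota>\<in>I. c \<tau> \<iota> + v \<iota> n) + (SUP \<iota>\<in>I. c \<tau> \<iota> - v \<iota> n)"
      by (rule SUP_plus_SUP_minus_contraction[OF I _ v \<psi>])
  qed
  also have "\<dots> = (\<Sum>\<tau>\<in>signs (Suc n). SUP \<iota>\<in>I. b \<iota> + (\<Sum>i<Suc n. \<tau> i * v \<iota> i))"
    by (simp add: sum_signs_Suc c_def algebra_simps)
  finally show ?case .
qed

lemma exp_plus_exp_minus_le: "exp (y::real) + exp (-y) \<le> 2 * exp (y\<^sup>2 / 2)"
proof -
  have pos: "exp y + exp (-y) \<le> 2 * exp (y\<^sup>2 / 2)" if "y \<ge> 0" for y :: real
  proof -
    define a where "a = (exp y + exp (-y)) / 2"
    have a: "a > 0" by (simp add: a_def add_pos_pos)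
    have "1 + (1 / 2) * (exp (2 * y) - 1) = a * exp y"
      by (simp add: a_def field_simps flip: exp_add)
    then have "- y + ln (a * exp y) \<le> y\<^sup>2 / 2"
      using Hoeffdings_lemma_aux[of "2 * y" "1 / 2"] that by (simp add: power2_eq_square)
    then have "ln a \<le> y\<^sup>2 / 2"
      using a by (simp add: ln_mult)
    then have "a \<le> exp (y\<^sup>2 / 2)"
      using a by (metis exp_le_cancel_iff exp_ln)
    then show ?thesis by (simp add: a_def)
  qed
  show ?thesis
    using pos[of y] pos[of "-y"] by (cases "y \<ge> 0") (auto simp: add.commute)
qed

lemma card_signs: "card (signs n) = 2 ^ n"
  by (simp add: card_PiE numeral_2_eq_2)

lemma sum_signs_exp_le:
  assumes "\<And>i. i < n \<Longrightarrow> \<bar>u i\<bar> \<le> 1"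
  shows "(\<Sum>\<tau>\<in>signs n. exp (l * (\<Sum>i<n. \<tau> i * u i))) \<le> 2 ^ n * exp (l\<^sup>2 * real n / 2)"
proof -
  have "(\<Sum>\<tau>\<in>signs n. exp (l * (\<Sum>i<n. \<tau> i * u i))) = (\<Sum>\<tau>\<in>signs n. \<Prod>i<n. exp (l * u i * \<tau> i))"
    by (simp add: sum_distrib_left exp_sum mult_ac)
  also have "\<dots> = (\<Prod>i<n. \<Sum>s\<in>{-1, 1}. exp (l * u i * s))"
    by (rule prod_sum_PiE[symmetric]) auto
  also have "\<dots> \<le> (\<Prod>i<n. 2 * exp (l\<^sup>2 / 2))"
  proof (rule prod_mono)
    fix i assume "i \<in> {..<n}"
    then have "(u i)\<^sup>2 \<le> 1"
      using assms[of i] by (simp add: abs_square_le_1)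
    then have "(l * u i)\<^sup>2 \<le> l\<^sup>2"
      by (simp add: power_mult_distrib mult_left_le)
    then have "exp (l * u i) + exp (- (l * u i)) \<le> 2 * exp (l\<^sup>2 / 2)"
      using exp_plus_exp_minus_le[of "l * u i"] by (smt (verit) divide_right_mono exp_le_cancel_iff)
    then show "0 \<le> (\<Sum>s\<in>{-1, 1}. exp (l * u i * s)) \<and> (\<Sum>s\<in>{-1, 1}. exp (l * u i * s)) \<le> 2 * exp (l\<^sup>2 / 2)"
      by (simp add: add_nonneg_nonneg)
  qed
  also have "\<dots> = 2 ^ n * exp (l\<^sup>2 * real n / 2)"
    by (simp add: power_mult_distrib mult_ac flip: exp_of_nat_mult)
  finally show ?thesis .
qed

lemma exp_mean_le_mean_exp:
  assumes "finite X" and "X \<noteq> {}"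
  shows "exp ((\<Sum>x\<in>X. f x) / card X) \<le> (\<Sum>x\<in>X. exp (f x)) / card X"
  using convex_on_sum[OF assms exp_convex, of "\<lambda>_. 1 / card X" f] assms
  by (simp add: sum_divide_distrib)

lemma sum_signs_Max_le:
  fixes w :: "'j \<Rightarrow> nat \<Rightarrow> real"
  assumes J: "finite J" "2 \<le> card J" and w: "\<And>j i. j \<in> J \<Longrightarrow> i < n \<Longrightarrow> \<bar>w j i\<bar> \<le> 1"
  shows "(\<Sum>\<tau>\<in>signs n. Max ((\<lambda>j. \<Sum>i<n. \<tau> i * w j i) ` J)) \<le> 2 ^ n * sqrt (2 * real n * ln (card J))"
proof (cases "n = 0")
  case True
  moreover have "J \<noteq> {}" using J by auto
  ultimately show ?thesis by (simp add: image_constant_conv)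
next
  case False
  define A where "A \<tau> = Max ((\<lambda>j. \<Sum>i<n. \<tau> i * w j i) ` J)" for \<tau>
  define \<mu> where "\<mu> = (\<Sum>\<tau>\<in>signs n. A \<tau>) / 2 ^ n"
  define l where "l = sqrt (2 * ln (card J) / real n)"
  have ln: "ln (card J) > 0" using J by simp
  have l: "l > 0" and l2: "l\<^sup>2 * real n = 2 * ln (card J)"
    using ln False by (simp_all add: l_def)
  have "exp (l * \<mu>) \<le> (\<Sum>\<tau>\<in>signs n. exp (l * A \<tau>)) / 2 ^ n"
    using exp_mean_le_mean_exp[of "signs n" "\<lambda>\<tau>. l * A \<tau>"]
    by (simp add: \<mu>_def card_signs finite_PiE sum_distrib_left PiE_eq_empty_iff)
  also have "\<dots> \<le> (\<Sum>\<tau>\<in>signs n. \<Sum>j\<in>J. exp (l * (\<Sum>i<n. \<tau> i * w j i))) / 2 ^ n"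
  proof (intro divide_right_mono sum_mono)
    fix \<tau>
    obtain j where "j \<in> J" "A \<tau> = (\<Sum>i<n. \<tau> i * w j i)"
      using Max_in[of "(\<lambda>j. \<Sum>i<n. \<tau> i * w j i) ` J"] J unfolding A_def by fastforce
    then show "exp (l * A \<tau>) \<le> (\<Sum>j\<in>J. exp (l * (\<Sum>i<n. \<tau> i * w j i)))"
      using J by (auto intro: member_le_sum)
  qed simp
  also have "\<dots> \<le> (\<Sum>j\<in>J. 2 ^ n * exp (l\<^sup>2 * real n / 2)) / 2 ^ n"
    by (subst sum.swap, intro divide_right_mono sum_mono sum_signs_exp_le) (use w in auto)
  also have "\<dots> = exp (ln (card J) + l\<^sup>2 * real n / 2)"
    using J by (simp add: exp_add)
  finally have "l * \<mu> \<le> l * (l * real n)"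
    using l2 by (simp add: power2_eq_square)
  then have "\<mu> \<le> l * real n"
    using l by simp
  also have "l * real n = sqrt (2 * real n * ln (card J))"
    using False ln by (simp add: l_def real_sqrt_mult real_sqrt_divide field_simps)
  finally show ?thesis
    by (simp add: \<mu>_def A_def field_simps)
qed

section \<open>Rademacher sums of the unit path-norm ball\<close>

locale unit_box_sample =
  fixes n :: nat and y :: "nat \<Rightarrow> real^'d::finite"
  assumes in_box: "\<And>i j. \<bar>y i $ j\<bar> \<le> 1"
begin

definition unit_class :: "(real^'d \<Rightarrow> real) set" where
  "unit_class = {f. path_class f 1}"

definition corr :: "(real \<Rightarrow> real) \<Rightarrow> (nat \<Rightarrow> real) \<Rightarrow> real" where
  "corr \<psi> \<tau> = (SUP f\<in>unit_class. \<Sum>i<n. \<tau> i * \<psi> (f (y i)))"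

lemma zero_in_unit_class: "(\<lambda>x. 0) \<in> unit_class"
  using path_class.mono[OF path_class_zero, of 1] by (simp add: unit_class_def)

lemma unit_class_abs_le: "f \<in> unit_class \<Longrightarrow> \<bar>f (y i)\<bar> \<le> 1"
  using in_box by (auto intro: path_class_abs_le simp: unit_class_def)

lemma corr_upper:
  assumes "\<tau> \<in> signs n" and "f \<in> unit_class" and "\<And>z. \<bar>\<psi> z\<bar> \<le> \<bar>z\<bar>"
  shows "(\<Sum>i<n. \<tau> i * \<psi> (f (y i))) \<le> corr \<psi> \<tau>"
proof -
  have "\<bar>\<psi> (g (y i))\<bar> \<le> 1" if "g \<in> unit_class" for g i
    using order_trans[OF assms(3) unit_class_abs_le[OF that]] .
  then have "\<bar>\<Sum>i<n. \<tau> i * \<psi> (g (y i))\<bar> \<le> real n" if "g \<in> unit_class" for g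
    using abs_sum_signs_le[OF assms(1), of "\<lambda>i. \<psi> (g (y i))" 1] that by simp
  then have "bdd_above ((\<lambda>g. \<Sum>i<n. \<tau> i * \<psi> (g (y i))) ` unit_class)"
    by (rule bdd_above_image_abs_le)
  then show ?thesis
    unfolding corr_def using assms(2) by (rule cSUP_upper2) simp
qed

lemma corr_nonneg:
  assumes "\<tau> \<in> signs n" and "\<And>z. \<bar>\<psi> z\<bar> \<le> \<bar>z\<bar>"
  shows "0 \<le> corr \<psi> \<tau>"
  using corr_upper[OF assms(1) zero_in_unit_class assms(2)] assms(2)[of 0] by simp

lemma path_class_le_corr:
  assumes f: "path_class f q" and \<tau>: "\<tau> \<in> signs n"
    and hom: "\<And>c z. c \<ge> 0 \<Longrightarrow> \<psi> (c * z) = c * \<psi> z" and \<psi>: "\<And>z. \<bar>\<psi> z\<bar> \<le> \<bar>z\<bar>"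
  shows "(\<Sum>i<n. \<tau> i * \<psi> (f (y i))) \<le> q * corr \<psi> \<tau>"
proof (cases "q = 0")
  case True
  then have "f (y i) = 0" for i
    using path_class_abs_le[OF f] in_box by force
  then show ?thesis using True \<psi>[of 0] by simp
next
  case False
  then have q: "q > 0" using path_class_nonneg[OF f] by simp
  have "(\<lambda>x. f x / q) \<in> unit_class"
    using path_class_scale[OF f, of "1 / q"] q by (simp add: unit_class_def)
  from corr_upper[OF \<tau> this \<psi>]
  have "(\<Sum>i<n. \<tau> i * \<psi> (f (y i) / q)) \<le> corr \<psi> \<tau>" .
  moreover have "\<psi> (f x / q) = \<psi> (f x) / q" for x
    using hom[of "1 / q" "f x"] q by simp
  ultimately have "(\<Sum>i<n. \<tau> i * \<psi> (f (y i))) / q \<le> corr \<psi> \<tau>"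
    by (simp add: sum_divide_distrib)
  then show ?thesis using q by (simp add: pos_divide_le_eq mult.commute)
qed

lemma path_class_le_corr_id:
  "path_class f q \<Longrightarrow> \<tau> \<in> signs n \<Longrightarrow> (\<Sum>i<n. \<tau> i * f (y i)) \<le> q * corr (\<lambda>z. z) \<tau>"
  using path_class_le_corr[of f q \<tau> "\<lambda>z. z"] by simp

definition coord_max :: "(nat \<Rightarrow> real) \<Rightarrow> real" where
  "coord_max \<tau> = Max ((\<lambda>(j, s). \<Sum>i<n. \<tau> i * (s * y i $ j)) ` (UNIV \<times> {-1, 1}))"

lemma coord_le_coord_max: "s \<in> {-1, 1} \<Longrightarrow> (\<Sum>i<n. \<tau> i * (s * y i $ j)) \<le> coord_max \<tau>"
  unfolding coord_max_def by (rule Max_ge) (auto intro: rev_image_eqI[of "(j, s)"])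

lemma coord_max_nonneg: "0 \<le> coord_max \<tau>"
  using coord_le_coord_max[of 1 \<tau> undefined] coord_le_coord_max[of "-1" \<tau> undefined]
  by (simp add: sum_negf)

lemma path_class_relu_unit_le_corr:
  assumes \<phi>: "path_class \<phi> q" and \<tau>: "\<tau> \<in> signs n"
  shows "(\<Sum>i<n. \<tau> i * (c * relu (\<phi> (y i)))) \<le> \<bar>c\<bar> * q * (corr relu \<tau> + corr (\<lambda>z. - relu z) \<tau>)"
proof -
  have q: "q \<ge> 0" using path_class_nonneg[OF \<phi>] .
  have corr: "(\<Sum>i<n. \<tau> i * relu (\<phi> (y i))) \<le> q * corr relu \<tau>"
    "(\<Sum>i<n. \<tau> i * - relu (\<phi> (y i))) \<le> q * corr (\<lambda>z. - relu z) \<tau>"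
    by (rule path_class_le_corr[OF \<phi> \<tau>]; simp add: relu_mult_nonneg relu_abs_le)+
  have nonneg: "0 \<le> corr relu \<tau>" "0 \<le> corr (\<lambda>z. - relu z) \<tau>"
    by (rule corr_nonneg[OF \<tau>]; simp add: relu_abs_le)+
  show ?thesis
  proof (cases "c \<ge> 0")
    case True
    have "(\<Sum>i<n. \<tau> i * (c * relu (\<phi> (y i)))) = c * (\<Sum>i<n. \<tau> i * relu (\<phi> (y i)))"
      by (simp add: sum_distrib_left mult_ac)
    also have "\<dots> \<le> c * (q * corr relu \<tau>)"
      using corr(1) True by (rule mult_left_mono)
    also have "\<dots> \<le> \<bar>c\<bar> * q * (corr relu \<tau> + corr (\<lambda>z. - relu z) \<tau>)"
      using True q nonneg by (simp add: algebra_simps)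
    finally show ?thesis .
  next
    case False
    have "(\<Sum>i<n. \<tau> i * (c * relu (\<phi> (y i)))) = (- c) * (\<Sum>i<n. \<tau> i * - relu (\<phi> (y i)))"
      by (simp add: sum_distrib_left mult_ac)
    also have "\<dots> \<le> (- c) * (q * corr (\<lambda>z. - relu z) \<tau>)"
      using corr(2) False by (intro mult_left_mono) auto
    also have "\<dots> \<le> \<bar>c\<bar> * q * (corr relu \<tau> + corr (\<lambda>z. - relu z) \<tau>)"
      using False q nonneg mult_nonpos_nonneg[of c "q * corr relu \<tau>"] by (simp add: algebra_simps)
    finally show ?thesis .
  qed
qed

lemma path_class_le_coord_max_corr_relu:
  assumes \<tau>: "\<tau> \<in> signs n"
  shows "path_class f q \<Longrightarrow>
    (\<Sum>i<n. \<tau> i * f (y i)) \<le> q * max (coord_max \<tau>) ((corr relu \<tau> + corr (\<lambda>z. - relu z) \<tau>) / 3)"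
proof (induction rule: path_class.induct)
  case (coord c j)
  define s :: real where "s = (if c \<ge> 0 then 1 else -1)"
  have "(\<Sum>i<n. \<tau> i * (c * y i $ j)) = \<bar>c\<bar> * (\<Sum>i<n. \<tau> i * (s * y i $ j))"
    by (cases "c \<ge> 0") (simp_all add: s_def sum_distrib_left mult_ac)
  also have "\<dots> \<le> \<bar>c\<bar> * coord_max \<tau>"
    by (rule mult_left_mono[OF coord_le_coord_max]) (auto simp: s_def)
  also have "\<dots> \<le> \<bar>c\<bar> * max (coord_max \<tau>) ((corr relu \<tau> + corr (\<lambda>z. - relu z) \<tau>) / 3)"
    by (rule mult_left_mono) auto
  finally show ?case .
next
  case (relu_unit \<phi> q c)
  have "(\<Sum>i<n. \<tau> i * (c * relu (\<phi> (y i)))) \<le> 3 * \<bar>c\<bar> * q * ((corr relu \<tau> + corr (\<lambda>z. - relu z) \<tau>) / 3)"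
    using path_class_relu_unit_le_corr[OF relu_unit.hyps \<tau>, of c] by simp
  also have "\<dots> \<le> 3 * \<bar>c\<bar> * q * max (coord_max \<tau>) ((corr relu \<tau> + corr (\<lambda>z. - relu z) \<tau>) / 3)"
    using path_class_nonneg[OF relu_unit.hyps] by (intro mult_left_mono) auto
  finally show ?case .
next
  case (add f p g q)
  then show ?case by (simp add: sum.distrib distrib_left distrib_right)
next
  case (mono f p q)
  have "0 \<le> max (coord_max \<tau>) ((corr relu \<tau> + corr (\<lambda>z. - relu z) \<tau>) / 3)"
    using coord_max_nonneg[of \<tau>] by simp
  with mono show ?case
    by (meson mult_right_mono order_trans)
qed

lemma corr_id_le:
  assumes "\<tau> \<in> signs n"
  shows "corr (\<lambda>z. z) \<tau> \<le> coord_max \<tau> + (corr relu \<tau> + corr (\<lambda>z. - relu z) \<tau>) / 3"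
proof -
  define B where "B = max (coord_max \<tau>) ((corr relu \<tau> + corr (\<lambda>z. - relu z) \<tau>) / 3)"
  have "(\<Sum>i<n. \<tau> i * f (y i)) \<le> B" if "f \<in> unit_class" for f
    using path_class_le_coord_max_corr_relu[OF assms, of f 1] that
    unfolding B_def unit_class_def by simp
  then have "corr (\<lambda>z. z) \<tau> \<le> B"
    unfolding corr_def using zero_in_unit_class by (intro cSUP_least) auto
  moreover have "0 \<le> corr relu \<tau>" "0 \<le> corr (\<lambda>z. - relu z) \<tau>"
    by (rule corr_nonneg[OF assms]; simp add: relu_abs_le)+
  ultimately show ?thesis
    using coord_max_nonneg[of \<tau>] unfolding B_def add_divide_distrib by linarith
qed

lemma sum_corr_le_sum_corr_id:
  assumes "\<And>a b. \<bar>\<psi> a - \<psi> b\<bar> \<le> \<bar>a - b\<bar>"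
  shows "(\<Sum>\<tau>\<in>signs n. corr \<psi> \<tau>) \<le> (\<Sum>\<tau>\<in>signs n. corr (\<lambda>z. z) \<tau>)"
proof -
  have "unit_class \<noteq> {}"
    using zero_in_unit_class by blast
  from sum_signs_SUP_contraction[OF this unit_class_abs_le, where b = "\<lambda>_. 0" and Kb = 0 and \<psi> = \<psi>]
    assms
  show ?thesis
    unfolding corr_def by simp
qed

lemma sum_coord_max_le:
  "(\<Sum>\<tau>\<in>signs n. coord_max \<tau>) \<le> 2 ^ n * sqrt (2 * real n * ln (2 * real CARD('d)))"
proof -
  define J where "J = (UNIV :: 'd set) \<times> {-1, 1::real}"
  define w where "w js i = snd js * y i $ fst js" for js i
  have "card J = 2 * CARD('d)"
    by (simp add: J_def card_cartesian_product)
  moreover have "2 \<le> card J"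
    using \<open>card J = 2 * CARD('d)\<close> by (simp add: Suc_le_eq)
  moreover have "\<bar>w js i\<bar> \<le> 1" if "js \<in> J" for js i
    using that in_box by (auto simp: J_def w_def)
  ultimately have "(\<Sum>\<tau>\<in>signs n. Max ((\<lambda>js. \<Sum>i<n. \<tau> i * w js i) ` J))
      \<le> 2 ^ n * sqrt (2 * real n * ln (2 * real CARD('d)))"
    using sum_signs_Max_le[of J n w] by (simp add: J_def)
  then show ?thesis
    by (simp add: coord_max_def J_def w_def case_prod_beta)
qed

lemma sum_corr_id_le:
  "(\<Sum>\<tau>\<in>signs n. corr (\<lambda>z. z) \<tau>) \<le> 3 * (2 ^ n * sqrt (2 * real n * ln (2 * real CARD('d))))"
proof -
  define R where "R = 2 ^ n * sqrt (2 * real n * ln (2 * real CARD('d)))"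
  have "(\<Sum>\<tau>\<in>signs n. corr (\<lambda>z. z) \<tau>)
      \<le> (\<Sum>\<tau>\<in>signs n. coord_max \<tau>) + ((\<Sum>\<tau>\<in>signs n. corr relu \<tau>) + (\<Sum>\<tau>\<in>signs n. corr (\<lambda>z. - relu z) \<tau>)) / 3"
    using sum_mono[of "signs n" "corr (\<lambda>z. z)", OF corr_id_le]
    by (simp add: sum.distrib add_divide_distrib flip: sum_divide_distrib)
  moreover have "(\<Sum>\<tau>\<in>signs n. corr relu \<tau>) \<le> (\<Sum>\<tau>\<in>signs n. corr (\<lambda>z. z) \<tau>)"
    "(\<Sum>\<tau>\<in>signs n. corr (\<lambda>z. - relu z) \<tau>) \<le> (\<Sum>\<tau>\<in>signs n. corr (\<lambda>z. z) \<tau>)"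
    by (rule sum_corr_le_sum_corr_id; use relu_lipschitz in \<open>simp add: abs_minus_commute\<close>)+
  moreover have "(\<Sum>\<tau>\<in>signs n. coord_max \<tau>) \<le> R"
    unfolding R_def by (rule sum_coord_max_le)
  ultimately show ?thesis
    unfolding R_def[symmetric] add_divide_distrib by linarith
qed

end

section \<open>The class G_M\<close>

lemma G_class_nonempty:
  fixes A :: "'a set"
  assumes "M \<ge> 0"
  shows "(G_class m D L A \<gamma> M :: ((real^'d::finite) \<times> 'a \<times> (real^'d) \<Rightarrow> real) set) \<noteq> {}"
proof -
  define \<Theta> :: "'a \<Rightarrow> 'd resnet_param"
    where "\<Theta> = (\<lambda>_. \<lparr>out_w = \<lambda>_. 0, in_w = \<lambda>_ _. 0, W_w = \<lambda>_ _ _. 0, U_w = \<lambda>_ _ _. 0\<rparr>)"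
  have "(\<Sum>a\<in>A. path_norm m D L (\<Theta> a)) \<le> M"
    using assms by (simp add: \<Theta>_def path_norm_def)
  then have "(\<lambda>(s, a, s'). resnet m D L s (\<Theta> a) - \<gamma> * Max ((\<lambda>a'. resnet m D L s' (\<Theta> a')) ` A))
      \<in> G_class m D L A \<gamma> M"
    unfolding G_class_def by blast
  then show ?thesis by blast
qed

(* Restricting the sample to the indices with a given action: networks vanish at 0, so masked
   points contribute nothing, and masking beyond n makes the box condition hold for all indices. *)
definition masked_sample :: "nat \<Rightarrow> (nat \<Rightarrow> bool) \<Rightarrow> (nat \<Rightarrow> real^'d) \<Rightarrow> nat \<Rightarrow> real^'d::finite" where
  "masked_sample n P s i = (if i < n \<and> P i then s i else 0)"

lemma unit_box_sample_masked:
  "(\<And>i j. i < n \<Longrightarrow> \<bar>s i $ j\<bar> \<le> 1) \<Longrightarrow> unit_box_sample (masked_sample n P s)"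
  by unfold_locales (simp add: masked_sample_def)

lemma resnet_split_by_action:
  assumes "finite A" and "a i \<in> A" and "i < n"
  shows "resnet m D L (s i) (\<Theta> (a i))
    = (\<Sum>b\<in>A. resnet m D L (masked_sample n (\<lambda>i. a i = b) s i) (\<Theta> b))"
proof -
  have "(\<Sum>b\<in>A. resnet m D L (masked_sample n (\<lambda>i. a i = b) s i) (\<Theta> b))
      = (\<Sum>b\<in>A. if b = a i then resnet m D L (s i) (\<Theta> (a i)) else 0)"
    using assms(3) by (intro sum.cong) (auto simp: masked_sample_def resnet_at_zero)
  then show ?thesis
    using assms(1,2) by simp
qed

lemma sum_resnet_by_action_le:
  fixes s :: "nat \<Rightarrow> real^'d::finite" and a :: "nat \<Rightarrow> 'a" and \<Theta> :: "'a \<Rightarrow> 'd resnet_param"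
  assumes A: "finite A" and a: "\<And>i. i < n \<Longrightarrow> a i \<in> A" and s: "\<And>i j. i < n \<Longrightarrow> \<bar>s i $ j\<bar> \<le> 1"
    and norm: "\<And>b. b \<in> A \<Longrightarrow> path_norm m D L (\<Theta> b) \<le> M" and \<tau>: "\<tau> \<in> signs n"
  shows "(\<Sum>i<n. \<tau> i * resnet m D L (s i) (\<Theta> (a i)))
    \<le> M * (\<Sum>b\<in>A. unit_box_sample.corr n (masked_sample n (\<lambda>i. a i = b) s) (\<lambda>z. z) \<tau>)"
proof -
  define y where "y b = masked_sample n (\<lambda>i. a i = b) s" for b
  have y: "unit_box_sample (y b)" for b
    unfolding y_def using s by (rule unit_box_sample_masked)
  have "resnet m D L (s i) (\<Theta> (a i)) = (\<Sum>b\<in>A. resnet m D L (y b i) (\<Theta> b))" if "i < n" for i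
    unfolding y_def by (rule resnet_split_by_action[where a = a, OF A a[OF that] that])
  then have "(\<Sum>i<n. \<tau> i * resnet m D L (s i) (\<Theta> (a i)))
      = (\<Sum>b\<in>A. \<Sum>i<n. \<tau> i * resnet m D L (y b i) (\<Theta> b))"
    by (simp add: sum_distrib_left sum.swap[of _ A])
  also have "\<dots> \<le> (\<Sum>b\<in>A. M * unit_box_sample.corr n (y b) (\<lambda>z. z) \<tau>)"
  proof (rule sum_mono)
    fix b assume "b \<in> A"
    have "(\<Sum>i<n. \<tau> i * resnet m D L (y b i) (\<Theta> b))
        \<le> path_norm m D L (\<Theta> b) * unit_box_sample.corr n (y b) (\<lambda>z. z) \<tau>"
      by (rule unit_box_sample.path_class_le_corr_id[OF y resnet_path_class \<tau>])
    also have "\<dots> \<le> M * unit_box_sample.corr n (y b) (\<lambda>z. z) \<tau>"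
      using norm[OF \<open>b \<in> A\<close>] unit_box_sample.corr_nonneg[OF y[of b] \<tau>, of "\<lambda>z. z"]
      by (intro mult_right_mono) auto
    finally show "(\<Sum>i<n. \<tau> i * resnet m D L (y b i) (\<Theta> b)) \<le> M * unit_box_sample.corr n (y b) (\<lambda>z. z) \<tau>" .
  qed
  finally show ?thesis
    by (simp add: y_def sum_distrib_left)
qed

lemma sum_discounted_Max_le:
  fixes s' :: "nat \<Rightarrow> real^'d::finite" and A :: "'a set" and \<Theta> :: "'a \<Rightarrow> 'd resnet_param"
  assumes A: "finite A" "card A = 2 ^ \<alpha>" and s': "\<And>i j. i < n \<Longrightarrow> \<bar>s' i $ j\<bar> \<le> 1"
    and \<gamma>: "0 \<le> \<gamma>" "\<gamma> \<le> 1" and norm: "(\<Sum>a\<in>A. path_norm m D L (\<Theta> a)) \<le> M"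
    and \<tau>: "\<tau> \<in> signs n"
  shows "(\<Sum>i<n. \<tau> i * (- \<gamma> * Max ((\<lambda>a'. resnet m D L (s' i) (\<Theta> a')) ` A)))
    \<le> 7 ^ \<alpha> * M * unit_box_sample.corr n (masked_sample n (\<lambda>_. True) s') (\<lambda>z. z) \<tau>"
proof -
  define y' where "y' = masked_sample n (\<lambda>_. True) s'"
  interpret y': unit_box_sample n y'
    unfolding y'_def using s' by (rule unit_box_sample_masked)
  define N where "N = (\<Sum>a\<in>A. path_norm m D L (\<Theta> a))"
  define H where "H x = - \<gamma> * Max ((\<lambda>a'. resnet m D L x (\<Theta> a')) ` A)" for x
  have "path_class H (\<gamma> * (7 ^ \<alpha> * N))"
    using path_class_scale[OF path_class_Max[OF A resnet_path_class], of "- \<gamma>"] \<gamma>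
    unfolding H_def N_def by simp
  then have "(\<Sum>i<n. \<tau> i * H (y' i)) \<le> \<gamma> * (7 ^ \<alpha> * N) * y'.corr (\<lambda>z. z) \<tau>"
    using \<tau> by (rule y'.path_class_le_corr_id)
  also have "\<dots> \<le> 7 ^ \<alpha> * M * y'.corr (\<lambda>z. z) \<tau>"
  proof -
    have "0 \<le> N"
      unfolding N_def by (intro sum_nonneg path_norm_nonneg)
    then have "\<gamma> * N \<le> M"
      using mult_left_le_one_le[of N \<gamma>] \<gamma> norm unfolding N_def by linarith
    then show ?thesis
      using y'.corr_nonneg[OF \<tau>, of "\<lambda>z. z"] by (simp add: mult_right_mono mult.left_commute)
  qed
  finally show ?thesis
    by (simp add: H_def y'_def masked_sample_def)
qed

lemma G_class_correlation_le:
  fixes s s' :: "nat \<Rightarrow> real^'d::finite" and a :: "nat \<Rightarrow> 'a" and A :: "'a set"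
  assumes A: "finite A" "card A = 2 ^ \<alpha>" and a: "\<And>i. i < n \<Longrightarrow> a i \<in> A"
    and s: "\<And>i j. i < n \<Longrightarrow> \<bar>s i $ j\<bar> \<le> 1" and s': "\<And>i j. i < n \<Longrightarrow> \<bar>s' i $ j\<bar> \<le> 1"
    and \<gamma>: "0 \<le> \<gamma>" "\<gamma> \<le> 1" and g: "g \<in> G_class m D L A \<gamma> M" and \<tau>: "\<tau> \<in> signs n"
  shows "(\<Sum>i<n. \<tau> i * g (s i, a i, s' i))
    \<le> M * ((\<Sum>b\<in>A. unit_box_sample.corr n (masked_sample n (\<lambda>i. a i = b) s) (\<lambda>z. z) \<tau>)
            + 7 ^ \<alpha> * unit_box_sample.corr n (masked_sample n (\<lambda>_. True) s') (\<lambda>z. z) \<tau>)"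
proof -
  obtain \<Theta> where g_def: "g = (\<lambda>(s, a, s'). resnet m D L s (\<Theta> a) - \<gamma> * Max ((\<lambda>a'. resnet m D L s' (\<Theta> a')) ` A))"
    and norm: "(\<Sum>a\<in>A. path_norm m D L (\<Theta> a)) \<le> M"
    using g unfolding G_class_def by auto
  have norm_le: "path_norm m D L (\<Theta> b) \<le> M" if "b \<in> A" for b
    using member_le_sum[OF that, of "\<lambda>b. path_norm m D L (\<Theta> b)"] path_norm_nonneg A(1) norm by force
  have "(\<Sum>i<n. \<tau> i * resnet m D L (s i) (\<Theta> (a i)))
      \<le> M * (\<Sum>b\<in>A. unit_box_sample.corr n (masked_sample n (\<lambda>i. a i = b) s) (\<lambda>z. z) \<tau>)"
    by (rule sum_resnet_by_action_le[where s = s, OF A(1) a s norm_le \<tau>])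
  moreover have "(\<Sum>i<n. \<tau> i * g (s i, a i, s' i))
      = (\<Sum>i<n. \<tau> i * resnet m D L (s i) (\<Theta> (a i)))
        + (\<Sum>i<n. \<tau> i * (- \<gamma> * Max ((\<lambda>a'. resnet m D L (s' i) (\<Theta> a')) ` A)))"
    by (simp add: g_def sum_subtractf sum_negf algebra_simps)
  moreover have "(\<Sum>i<n. \<tau> i * (- \<gamma> * Max ((\<lambda>a'. resnet m D L (s' i) (\<Theta> a')) ` A)))
      \<le> 7 ^ \<alpha> * M * unit_box_sample.corr n (masked_sample n (\<lambda>_. True) s') (\<lambda>z. z) \<tau>"
    by (rule sum_discounted_Max_le[where s' = s', OF A s' \<gamma> norm \<tau>])
  ultimately show ?thesis
    by (simp add: algebra_simps)
qed

lemma sum_signs_SUP_G_class_le: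
  fixes s s' :: "nat \<Rightarrow> real^'d::finite" and a :: "nat \<Rightarrow> 'a" and A :: "'a set"
  assumes A: "finite A" "card A = 2 ^ \<alpha>" and a: "\<And>i. i < n \<Longrightarrow> a i \<in> A"
    and s: "\<And>i j. i < n \<Longrightarrow> \<bar>s i $ j\<bar> \<le> 1" and s': "\<And>i j. i < n \<Longrightarrow> \<bar>s' i $ j\<bar> \<le> 1"
    and \<gamma>: "0 \<le> \<gamma>" "\<gamma> \<le> 1" and M: "0 \<le> M"
  shows "(\<Sum>\<tau>\<in>signs n. SUP g\<in>G_class m D L A \<gamma> M. \<Sum>i<n. \<tau> i * g (s i, a i, s' i))
    \<le> 2 ^ n * (3 * (real (card A) + 7 ^ \<alpha>) * M * sqrt (2 * real n * ln (2 * real CARD('d))))"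
proof -
  define R where "R = 3 * (2 ^ n * sqrt (2 * real n * ln (2 * real CARD('d))))"
  define C where "C y = unit_box_sample.corr n y (\<lambda>z. z)" for y :: "nat \<Rightarrow> real^'d"
  define y where "y b = masked_sample n (\<lambda>i. a i = b) s" for b
  define y' where "y' = masked_sample n (\<lambda>_. True) s'"
  have sum_C: "(\<Sum>\<tau>\<in>signs n. C (y b) \<tau>) \<le> R" "(\<Sum>\<tau>\<in>signs n. C y' \<tau>) \<le> R" for b
    unfolding C_def R_def y_def y'_def
    by (rule unit_box_sample.sum_corr_id_le, rule unit_box_sample_masked, simp add: s s')+
  have "(\<Sum>\<tau>\<in>signs n. SUP g\<in>G_class m D L A \<gamma> M. \<Sum>i<n. \<tau> i * g (s i, a i, s' i))
      \<le> (\<Sum>\<tau>\<in>signs n. M * ((\<Sum>b\<in>A. C (y b) \<tau>) + 7 ^ \<alpha> * C y' \<tau>))"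
    unfolding C_def y_def y'_def
    by (intro sum_mono cSUP_least G_class_nonempty M G_class_correlation_le[OF A a s s' \<gamma>])
  also have "\<dots> = M * ((\<Sum>b\<in>A. \<Sum>\<tau>\<in>signs n. C (y b) \<tau>) + 7 ^ \<alpha> * (\<Sum>\<tau>\<in>signs n. C y' \<tau>))"
    by (simp add: sum.distrib sum.swap[of _ A] flip: sum_distrib_left)
  also have "\<dots> \<le> M * ((\<Sum>b\<in>A. R) + 7 ^ \<alpha> * R)"
    using sum_C M by (intro mult_left_mono add_mono sum_mono) auto
  also have "\<dots> = 2 ^ n * (3 * (real (card A) + 7 ^ \<alpha>) * M * sqrt (2 * real n * ln (2 * real CARD('d))))"
    by (simp add: R_def algebra_simps)
  finally show ?thesis .
qed

lemma card_plus_7_pow_le: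
  assumes "k = 2 ^ \<alpha>"
  shows "real k + 7 ^ \<alpha> \<le> 2 * real k ^ 3"
proof -
  have "(7::real) ^ \<alpha> \<le> 8 ^ \<alpha>"
    by (rule power_mono) auto
  also have "\<dots> = real k ^ 3"
    using power_mult[of "2::real" 3 \<alpha>] power_mult[of "2::real" \<alpha> 3] by (simp add: assms mult.commute)
  finally have "7 ^ \<alpha> \<le> real k ^ 3" .
  moreover have "real k \<le> real k ^ 3"
    using power_increasing[of 1 3 "real k"] assms by simp
  ultimately show ?thesis by linarith
qed

lemma divide_mult_sqrt: "1 / real n * sqrt (c * real n) = sqrt (c / real n)"
proof (cases "n = 0")
  case False
  have "sqrt (c / real n) = sqrt (c * real n / (real n)\<^sup>2)"
    using False by (simp add: power2_eq_square)
  also have "\<dots> = sqrt (c * real n) / real n"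
    by (simp add: real_sqrt_divide)
  finally show ?thesis by simp
qed simp

lemma emp_rad_G_class_le:
  fixes s s' :: "nat \<Rightarrow> real^'d::finite" and a :: "nat \<Rightarrow> 'a" and A :: "'a set"
  assumes A: "finite A" "card A = 2 ^ \<alpha>" and a: "\<And>i. i < n \<Longrightarrow> a i \<in> A"
    and s: "\<And>i j. i < n \<Longrightarrow> \<bar>s i $ j\<bar> \<le> 1" and s': "\<And>i j. i < n \<Longrightarrow> \<bar>s' i $ j\<bar> \<le> 1"
    and \<gamma>: "0 \<le> \<gamma>" "\<gamma> \<le> 1" and M: "0 \<le> M"
  shows "emp_rad (G_class m D L A \<gamma> M) n (\<lambda>i. (s i, a i, s' i))
    \<le> 6 * real (card A) ^ 3 * M * sqrt (2 * ln (2 * real CARD('d)) / real n)"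
proof -
  define lg where "lg = ln (2 * real CARD('d))"
  have lg: "0 \<le> lg"
  proof -
    have "1 \<le> CARD('d)"
      by (simp add: Suc_le_eq card_gt_0_iff)
    then have "1 \<le> 2 * real CARD('d)"
      by linarith
    then show ?thesis
      unfolding lg_def by simp
  qed
  have "(\<Sum>\<tau>\<in>signs n. SUP g\<in>G_class m D L A \<gamma> M. \<Sum>i<n. \<tau> i * g (s i, a i, s' i))
      \<le> 2 ^ n * (3 * (real (card A) + 7 ^ \<alpha>) * M * sqrt (2 * real n * lg))"
    unfolding lg_def by (rule sum_signs_SUP_G_class_le[OF A]) (use a s s' \<gamma> M in auto)
  then have "emp_rad (G_class m D L A \<gamma> M) n (\<lambda>i. (s i, a i, s' i))
      \<le> 1 / real n * (3 * (real (card A) + 7 ^ \<alpha>) * M * sqrt (2 * real n * lg))"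
    unfolding emp_rad_def by (intro mult_left_mono) (simp_all add: pos_divide_le_eq mult.commute)
  also have "\<dots> = 3 * (real (card A) + 7 ^ \<alpha>) * M * (1 / real n * sqrt (2 * lg * real n))"
    by (simp add: mult_ac)
  also have "\<dots> = 3 * (real (card A) + 7 ^ \<alpha>) * M * sqrt (2 * lg / real n)"
    by (simp only: divide_mult_sqrt)
  also have "\<dots> \<le> 6 * real (card A) ^ 3 * M * sqrt (2 * lg / real n)"
    using card_plus_7_pow_le[OF A(2)] M lg by (intro mult_right_mono) auto
  finally show ?thesis unfolding lg_def .
qed

lemma prob_space_pair_dist:
  assumes "emeasure lborel S \<noteq> 0" and "emeasure lborel S < \<infinity>" and "finite A" and "A \<noteq> {}"
  shows "prob_space (pair_dist S A)"
  unfolding pair_dist_def using assms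
  by (intro prob_space_pair prob_space_uniform_measure prob_space_uniform_count_measure) auto

lemma AE_pair_dist:
  assumes "emeasure lborel S \<noteq> 0" and "emeasure lborel S < \<infinity>" and "finite A" and "A \<noteq> {}"
  shows "AE z in pair_dist S A. fst z \<in> S \<and> snd z \<in> A"
proof -
  let ?M1 = "uniform_measure lborel S" and ?M2 = "uniform_count_measure A"
  have fst: "distr (?M1 \<Otimes>\<^sub>M ?M2) ?M1 fst = ?M1"
    using assms(3,4) by (intro prob_space.distr_pair_fst prob_space_uniform_count_measure)
  have "AE x in ?M1. x \<in> S"
    using assms(1,2) by (subst AE_uniform_measure) auto
  then have "AE x in distr (?M1 \<Otimes>\<^sub>M ?M2) ?M1 fst. x \<in> S"
    by (simp only: fst)
  then have "AE z in ?M1 \<Otimes>\<^sub>M ?M2. fst z \<in> S"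
    by (rule AE_distrD[rotated]) simp
  moreover have "AE z in ?M1 \<Otimes>\<^sub>M ?M2. snd z \<in> A"
    by (rule AE_I2) (auto simp: space_pair_measure space_uniform_count_measure)
  ultimately show ?thesis
    unfolding pair_dist_def by eventually_elim auto
qed

lemma AE_PiM_all:
  assumes "finite I" and "prob_space M" and "AE x in M. P x"
  shows "AE \<omega> in PiM I (\<lambda>_. M). \<forall>i\<in>I. P (\<omega> i)"
  using assms AE_PiM_component[of I "\<lambda>_. M" _ P] by (intro eventually_ball_finite) auto

lemma nn_integral_le_AE_bound:
  assumes "prob_space M" and "AE x in M. f x \<le> c"
  shows "(\<integral>\<^sup>+ x. ennreal (f x) \<partial>M) \<le> ennreal c"
proof -
  have "(\<integral>\<^sup>+ x. ennreal (f x) \<partial>M) \<le> (\<integral>\<^sup>+ x. ennreal c \<partial>M)"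
    using assms(2) by (intro nn_integral_mono_AE) (auto intro: ennreal_leI)
  also have "\<dots> = ennreal c"
    using prob_space.emeasure_space_1[OF assms(1)] by simp
  finally show ?thesis .
qed

theorem lemma4p6:
  fixes S :: "(real^'d::finite) set" and A :: "'a set"
    and gt :: "real^'d \<Rightarrow> 'a \<Rightarrow> real \<Rightarrow> real^'d"
    and \<gamma> dt M :: real and m D L n \<alpha> :: nat
  assumes "compact S" and "S \<subseteq> {x. \<forall>j. 0 \<le> x $ j \<and> x $ j \<le> 1}"
    and "emeasure lborel S > 0"
    and "finite A" and "card A = 2 ^ \<alpha>"
    and "0 < \<gamma>" and "\<gamma> < 1"
    and "\<forall>s\<in>S. \<forall>a\<in>A. gt s a dt \<in> S"
    and "0 < dt" and "dt < 1"
    and "0 < m" and "0 < D" and "0 < L" and "0 < M"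
  shows "rad (G_class m D L A \<gamma> M) n S A gt dt
           \<le> ennreal (6 * real (card A) ^ 3 * M * sqrt (2 * ln (2 * real CARD('d)) / real n))"
proof -
  have S: "emeasure lborel S \<noteq> 0" "emeasure lborel S < \<infinity>"
    using assms(3) emeasure_bounded_finite[OF compact_imp_bounded[OF assms(1)]] by auto
  have A: "A \<noteq> {}"
    using assms(4,5) by auto
  have box: "\<bar>x $ j\<bar> \<le> 1" if "x \<in> S" for x j
    using assms(2) that by auto
  have "AE \<omega> in PiM {..<n} (\<lambda>_. pair_dist S A). \<forall>i\<in>{..<n}. fst (\<omega> i) \<in> S \<and> snd (\<omega> i) \<in> A"
    by (rule AE_PiM_all[OF _ prob_space_pair_dist[OF S assms(4) A] AE_pair_dist[OF S assms(4) A]]) simp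
  then have "AE \<omega> in PiM {..<n} (\<lambda>_. pair_dist S A).
      emp_rad (G_class m D L A \<gamma> M) n (\<lambda>i. (fst (\<omega> i), snd (\<omega> i), gt (fst (\<omega> i)) (snd (\<omega> i)) dt))
        \<le> 6 * real (card A) ^ 3 * M * sqrt (2 * ln (2 * real CARD('d)) / real n)"
    by eventually_elim (rule emp_rad_G_class_le[OF assms(4,5)], use assms(6-8,14) box in auto)
  then show ?thesis
    unfolding rad_def using S A assms(4)
    by (intro nn_integral_le_AE_bound prob_space_PiM prob_space_pair_dist)
qed

end
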